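(* Let $X=\bigcup_{n\ge1}X_n$ be a positively graded set. The graded vector space $K[\mathcal P_\infty,X]=\bigoplus_{n\ge1}K[\mathcal P_{n,X}]$, with the operations $\bullet_\gamma$ described in the context, is a shuffle algebra, and it is the free shuffle algebra on $X$: for every shuffle algebra $A$ and every map $\varphi:X\to A$ sending $X_n$ into $A_n$ for all $n$, there is a unique morphism of shuffle algebras $\Phi:K[\mathcal P_\infty,X]\to A$ (a degree-preserving linear map with $\Phi(u\bullet_\gamma v)=\Phi(u)\bullet_\gamma\Phi(v)$) such that $\Phi(\xi_n;x)=\varphi(x)$ for all $x\in X_n$, $n\ge1$.
   Context: Permutations $\sigma\in S_n$ are written as words $(\sigma(1),\dots,\sigma(n))$; $1_n$ is the identity, and $\sigma\cdot\tau$ denotes composition, $(\sigma\cdot\tau)(i)=\sigma(\tau(i))$. For $\sigma\in S_n$, $\tau\in S_m$, $\sigma\times\tau\in S_{n+m}$ is $(\sigma(1),\dots,\sigma(n),\tau(1)+n,\dots,\tau(m)+n)$. For nonnegative integers $n_1,\dots,n_r$ with sum $n$, $Sh(n_1,\dots,n_r)$ is the set of $\sigma\in S_n$ such that $\sigma^{-1}(n_1+\dots+n_{k-1}+1)<\dots<\sigma^{-1}(n_1+\dots+n_k)$ for every $k$. For $n,m\ge0$, $\epsilon_{n,m}=(n+1,\dots,n+m,1,\dots,n)\in Sh(n,m)$. A shuffle algebra is a graded vector space $A=\bigoplus_{n\ge0}A_n$ over a field $K$ with linear maps $\bullet_\gamma:A_n\otimes A_m\to A_{n+m}$ for all $n,m\ge0$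 and $\gamma\in Sh(n,m)$, such that for $x\in A_n$, $y\in A_m$, $z\in A_r$ one has $x\bullet_\gamma(y\bullet_\delta z)=(x\bullet_\sigma y)\bullet_\lambda z$ whenever $\gamma\in Sh(n,m+r)$, $\delta\in Sh(m,r)$, $\sigma\in Sh(n,m)$, $\lambda\in Sh(n+m,r)$ satisfy $(1_n\times\delta)\cdot\gamma=(\sigma\times1_r)\cdot\lambda$. $\mathcal P_{n,X}$ is the set of tuples $(f;x_1,\dots,x_r)$ where $1\le r\le n$, $f:\{1,\dots,n\}\to\{1,\dots,r\}$ is surjective, and $x_i\in X_{|f^{-1}(i)|}$ for $1\le i\le r$; such an element has degree $n$. Maps are written by their images $(f(1),\dots,f(n))$, and for a map $h$ on $\{1,\dots,n\}$ and $\gamma\in S_n$, $h\cdot\gamma$ is $i\mapsto h(\gamma(i))$. For $f:\{1..n\}\to\{1..r\}$ and $g:\{1..m\}\to\{1..k\}$, $f\times g=(f(1),\dots,f(n),g(1)+r,\dots,g(m)+r)$. The operations are $(f;x_1,\dots,x_r)\bullet_\gamma(g;y_1,\dots,y_k)=((f\times g)\cdot\gamma;x_1,\dots,x_r,y_1,\dots,y_k)$ for $\gamma\in Sh(n,m)$. $\xi_n$ denotes the constant map $\{1,\dots,n\}\to\{1\}$, so $(\xi_n;x)\in\mathcal P_{n,X}$ for $x\in X_n$. *)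

theory Defs
  imports Complex_Main "HOL-Library.Poly_Mapping"
begin

text \<open>A permutation of S_n is written as a word (list) (sigma(1),...,sigma(n)).\<close>

definition is_perm :: "nat \<Rightarrow> nat list \<Rightarrow> bool" where
  "is_perm n \<sigma> \<longleftrightarrow> length \<sigma> = n \<and> set \<sigma> = {1..n}"

definition app :: "nat list \<Rightarrow> nat \<Rightarrow> nat" where
  "app \<sigma> i = \<sigma> ! (i - 1)"

definition idw :: "nat \<Rightarrow> nat list" where
  "idw n = [1..<n+1]"

text \<open>Composition (sigma . tau)(i) = sigma(tau(i)); also used for h . gamma, i |-> h(gamma(i)).\<close>
definition comp :: "nat list \<Rightarrow> nat list \<Rightarrow> nat list" where
  "comp \<sigma> \<tau> = map (app \<sigma>) \<tau>"

definition ptimes :: "nat list \<Rightarrow> nat list \<Rightarrow> nat list" where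
  "ptimes \<sigma> \<tau> = \<sigma> @ map (\<lambda>v. v + length \<sigma>) \<tau>"

definition pinv :: "nat list \<Rightarrow> nat \<Rightarrow> nat" where
  "pinv \<sigma> k = (THE i. 1 \<le> i \<and> i \<le> length \<sigma> \<and> app \<sigma> i = k)"

definition Sh :: "nat \<Rightarrow> nat \<Rightarrow> nat list set" where
  "Sh n m = {\<sigma>. is_perm (n + m) \<sigma>
      \<and> (\<forall>i j. 1 \<le> i \<and> i < j \<and> j \<le> n \<longrightarrow> pinv \<sigma> i < pinv \<sigma> j)
      \<and> (\<forall>i j. n + 1 \<le> i \<and> i < j \<and> j \<le> n + m \<longrightarrow> pinv \<sigma> i < pinv \<sigma> j)}"

text \<open>A graded vector space over the field 'k is given by its homogeneous components
  A n, each a subspace of a common ambient vector space (scale) that serves only as a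
  container; the operation bullet_gamma : A_n x A_m -> A_(n+m) is op n m gamma.\<close>

definition lin_on :: "('k::field \<Rightarrow> 'u::ab_group_add \<Rightarrow> 'u) \<Rightarrow> ('k \<Rightarrow> 'v::ab_group_add \<Rightarrow> 'v)
    \<Rightarrow> 'u set \<Rightarrow> ('u \<Rightarrow> 'v) \<Rightarrow> bool" where
  "lin_on s1 s2 S f \<longleftrightarrow>
     (\<forall>x\<in>S. \<forall>y\<in>S. f (x + y) = f x + f y) \<and> (\<forall>c. \<forall>x\<in>S. f (s1 c x) = s2 c (f x))"

definition graded_vs :: "('k::field \<Rightarrow> 'v::ab_group_add \<Rightarrow> 'v) \<Rightarrow> (nat \<Rightarrow> 'v set) \<Rightarrow> bool" where
  "graded_vs scale A \<longleftrightarrow> vector_space scale \<and> (\<forall>n. module.subspace scale (A n))"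

definition shuffle_algebra :: "('k::field \<Rightarrow> 'v::ab_group_add \<Rightarrow> 'v) \<Rightarrow> (nat \<Rightarrow> 'v set)
    \<Rightarrow> (nat \<Rightarrow> nat \<Rightarrow> nat list \<Rightarrow> 'v \<Rightarrow> 'v \<Rightarrow> 'v) \<Rightarrow> bool" where
  "shuffle_algebra scale A op \<longleftrightarrow>
     graded_vs scale A
     \<and> (\<forall>n m \<gamma>. \<gamma> \<in> Sh n m \<longrightarrow>
          (\<forall>x\<in>A n. \<forall>y\<in>A m. op n m \<gamma> x y \<in> A (n + m))
        \<and> (\<forall>y\<in>A m. lin_on scale scale (A n) (\<lambda>x. op n m \<gamma> x y))
        \<and> (\<forall>x\<in>A n. lin_on scale scale (A m) (\<lambda>y. op n m \<gamma> x y)))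
     \<and> (\<forall>n m r \<gamma> \<delta> \<sigma> lam. \<gamma> \<in> Sh n (m + r) \<and> \<delta> \<in> Sh m r \<and> \<sigma> \<in> Sh n m \<and> lam \<in> Sh (n + m) r
          \<and> comp (ptimes (idw n) \<delta>) \<gamma> = comp (ptimes \<sigma> (idw r)) lam \<longrightarrow>
          (\<forall>x\<in>A n. \<forall>y\<in>A m. \<forall>z\<in>A r.
             op n (m + r) \<gamma> x (op m r \<delta> y z) = op (n + m) r lam (op n m \<sigma> x y) z))"

definition shuffle_hom ::
  "('k::field \<Rightarrow> 'u::ab_group_add \<Rightarrow> 'u) \<Rightarrow> (nat \<Rightarrow> 'u set) \<Rightarrow> (nat \<Rightarrow> nat \<Rightarrow> nat list \<Rightarrow> 'u \<Rightarrow> 'u \<Rightarrow> 'u)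
   \<Rightarrow> ('k \<Rightarrow> 'v::ab_group_add \<Rightarrow> 'v) \<Rightarrow> (nat \<Rightarrow> 'v set) \<Rightarrow> (nat \<Rightarrow> nat \<Rightarrow> nat list \<Rightarrow> 'v \<Rightarrow> 'v \<Rightarrow> 'v)
   \<Rightarrow> (nat \<Rightarrow> 'u \<Rightarrow> 'v) \<Rightarrow> bool" where
  "shuffle_hom s1 A op1 s2 B op2 \<Phi> \<longleftrightarrow>
     (\<forall>n. (\<forall>u\<in>A n. \<Phi> n u \<in> B n) \<and> lin_on s1 s2 (A n) (\<Phi> n))
     \<and> (\<forall>n m \<gamma> u v. \<gamma> \<in> Sh n m \<and> u \<in> A n \<and> v \<in> A m \<longrightarrow>
          \<Phi> (n + m) (op1 n m \<gamma> u v) = op2 n m \<gamma> (\<Phi> n u) (\<Phi> m v))"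

text \<open>An element (f; x_1,...,x_r) of P_{n,X} is the pair (f, [x_1,...,x_r]) where f is the
  word (f(1),...,f(n)). The graded set X is given by its components X n.\<close>

definition fib :: "nat list \<Rightarrow> nat \<Rightarrow> nat" where
  "fib f i = card {j. 1 \<le> j \<and> j \<le> length f \<and> app f j = i}"

definition P :: "nat \<Rightarrow> (nat \<Rightarrow> 'x set) \<Rightarrow> (nat list \<times> 'x list) set" where
  "P n X = {(f, xs). length f = n \<and> 1 \<le> length xs \<and> length xs \<le> n
       \<and> set f = {1..length xs}
       \<and> (\<forall>i. 1 \<le> i \<and> i \<le> length xs \<longrightarrow> xs ! (i - 1) \<in> X (fib f i))}"

definition mtimes :: "nat list \<Rightarrow> nat \<Rightarrow> nat list \<Rightarrow> nat list" where
  "mtimes f r g = f @ map (\<lambda>v. v + r) g"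

definition basis_op :: "nat list \<Rightarrow> (nat list \<times> 'x list) \<Rightarrow> (nat list \<times> 'x list)
    \<Rightarrow> (nat list \<times> 'x list)" where
  "basis_op \<gamma> a b = (comp (mtimes (fst a) (length (snd a)) (fst b)) \<gamma>, snd a @ snd b)"

text \<open>The vector space K[S] is realised as finitely supported functions S -> K.\<close>
definition fscale :: "'k::field \<Rightarrow> ('s \<Rightarrow>\<^sub>0 'k) \<Rightarrow> ('s \<Rightarrow>\<^sub>0 'k)" where
  "fscale c p = Poly_Mapping.map (\<lambda>a. c * a) p"

text \<open>Degree n component K[P_{n,X}] (zero for n = 0, as P_{0,X} is empty).\<close>
definition FA :: "(nat \<Rightarrow> 'x set) \<Rightarrow> nat \<Rightarrow> ((nat list \<times> 'x list) \<Rightarrow>\<^sub>0 'k::field) set" where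
  "FA X n = {p. Poly_Mapping.keys p \<subseteq> P n X}"

definition fop :: "nat \<Rightarrow> nat \<Rightarrow> nat list \<Rightarrow> ((nat list \<times> 'x list) \<Rightarrow>\<^sub>0 'k::field)
    \<Rightarrow> ((nat list \<times> 'x list) \<Rightarrow>\<^sub>0 'k) \<Rightarrow> ((nat list \<times> 'x list) \<Rightarrow>\<^sub>0 'k)" where
  "fop n m \<gamma> p q = (\<Sum>a\<in>Poly_Mapping.keys p. \<Sum>b\<in>Poly_Mapping.keys q.
       Poly_Mapping.single (basis_op \<gamma> a b) (Poly_Mapping.lookup p a * Poly_Mapping.lookup q b))"

definition gen :: "nat \<Rightarrow> 'x \<Rightarrow> ((nat list \<times> 'x list) \<Rightarrow>\<^sub>0 'k::field)" where
  "gen n x = Poly_Mapping.single (replicate n 1, [x]) 1"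

end

theory Submission
  imports Defs "HOL-Library.Multiset"
begin

(*
  Write k = |f^-1(1)|. Every basis element (f; x_1, ..., x_r) with r >= 2 factors uniquely as
  (xi_k; x_1) bullet_gamma (f'; x_2, ..., x_r), where gamma in Sh(k, n - k) places the block
  f^-1(1) and f' is f with that block removed. So a morphism Phi extending phi is forced on
  the basis by Phi(f; x_1, ..., x_r) = phi(x_1) bullet_gamma Phi(f'; x_2, ..., x_r), which gives
  uniqueness. For existence, the map defined by this recursion is multiplicative on basis
  elements by induction on r, using associativity in the target after reassociating
  shuffles: for sigma in Sh(n,m) and lambda in Sh(n+m,r) the word (sigma x 1_r) . lambda lies in
  Sh(n,m,r), and every element of Sh(n,m,r) is also of the form (1_n x delta) . gamma. Associativity of
  K[P_infinity, X] itself reduces to the corresponding identity of words f x g x h.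
*)

declare upt_Suc[simp del]

fun merge :: "bool list \<Rightarrow> 'a list \<Rightarrow> 'a list \<Rightarrow> 'a list" where
  "merge (True # c) (x # u) v = x # merge c u v"
| "merge (False # c) u (y # v) = y # merge c u v"
| "merge _ _ _ = []"

inductive mergeable :: "bool list \<Rightarrow> 'a list \<Rightarrow> 'b list \<Rightarrow> bool" where
  "mergeable [] [] []"
| "mergeable c u v \<Longrightarrow> mergeable (True # c) (x # u) v"
| "mergeable c u v \<Longrightarrow> mergeable (False # c) u (y # v)"

lemma mergeable_iff_length:
  "mergeable c u v \<longleftrightarrow> length (filter id c) = length u \<and> length (filter Not c) = length v"
proof (induction c arbitrary: u v)
  case Nil
  then show ?case by (auto intro: mergeable.intros elim: mergeable.cases)
next
  case (Cons b c)
  then show ?case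
    by (cases b; cases u; cases v) (auto intro: mergeable.intros elim: mergeable.cases)
qed

lemma mergeable_length: "mergeable c u v \<Longrightarrow> length c = length u + length v"
  by (induction rule: mergeable.induct) auto

lemma length_merge: "mergeable c u v \<Longrightarrow> length (merge c u v) = length c"
  by (induction rule: mergeable.induct) auto

lemma map_merge: "map h (merge c u v) = merge c (map h u) (map h v)"
  by (induction c u v rule: merge.induct) auto

lemma merge_filter_partition: "merge (map Q xs) (filter Q xs) (filter (\<lambda>x. \<not> Q x) xs) = xs"
  by (induction xs) auto

lemma mergeable_filter_partition: "mergeable (map Q xs) (filter Q xs) (filter (\<lambda>x. \<not> Q x) xs)"
  by (induction xs) (auto intro: mergeable.intros)

lemma filter_merge_left:
  "mergeable c u v \<Longrightarrow> \<forall>x\<in>set v. \<not> Q x \<Longrightarrow> filter Q (merge c u v) = filter Q u"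
  by (induction rule: mergeable.induct) auto

lemma filter_merge_right:
  "mergeable c u v \<Longrightarrow> \<forall>x\<in>set u. \<not> Q x \<Longrightarrow> filter Q (merge c u v) = filter Q v"
  by (induction rule: mergeable.induct) auto

lemma map_merge_pattern:
  "mergeable c u v \<Longrightarrow> \<forall>x\<in>set u. Q x \<Longrightarrow> \<forall>x\<in>set v. \<not> Q x \<Longrightarrow> map Q (merge c u v) = c"
  by (induction rule: mergeable.induct) auto

lemma pinv_nth: "distinct \<sigma> \<Longrightarrow> p < length \<sigma> \<Longrightarrow> pinv \<sigma> (\<sigma> ! p) = Suc p"
  unfolding pinv_def app_def
  by (rule the_equality) (auto simp: nth_eq_iff_index_eq)

lemma sorted_filter_iff_pinv_less:
  assumes "distinct \<gamma>"
  shows "sorted_wrt (<) (filter Q \<gamma>) \<longleftrightarrow>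
    (\<forall>i\<in>set \<gamma>. \<forall>j\<in>set \<gamma>. Q i \<longrightarrow> Q j \<longrightarrow> i < j \<longrightarrow> pinv \<gamma> i < pinv \<gamma> (j::nat))"
proof -
  have "sorted_wrt (<) (filter Q \<gamma>) \<longleftrightarrow> sorted_wrt (\<lambda>a b. Q a \<longrightarrow> Q b \<longrightarrow> a < b) \<gamma>"
    by (induction \<gamma>) auto
  also have "\<dots> \<longleftrightarrow> (\<forall>p<length \<gamma>. \<forall>q<length \<gamma>. Q (\<gamma> ! p) \<longrightarrow> Q (\<gamma> ! q) \<longrightarrow> \<gamma> ! p < \<gamma> ! q \<longrightarrow> p < q)"
    unfolding sorted_wrt_iff_nth_less
  proof (intro iffI allI impI)
    fix p q assume less: "\<forall>p q. p < q \<longrightarrow> q < length \<gamma> \<longrightarrow> Q (\<gamma> ! p) \<longrightarrow> Q (\<gamma> ! q) \<longrightarrow> \<gamma> ! p < \<gamma> ! q"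
      and pq: "p < length \<gamma>" "q < length \<gamma>" "Q (\<gamma> ! p)" "Q (\<gamma> ! q)" "\<gamma> ! p < \<gamma> ! q"
    show "p < q"
      using less[rule_format, of q p] pq by (cases q p rule: linorder_cases) auto
  next
    fix p q assume less: "\<forall>p<length \<gamma>. \<forall>q<length \<gamma>. Q (\<gamma> ! p) \<longrightarrow> Q (\<gamma> ! q) \<longrightarrow> \<gamma> ! p < \<gamma> ! q \<longrightarrow> p < q"
      and pq: "p < q" "q < length \<gamma>" "Q (\<gamma> ! p)" "Q (\<gamma> ! q)"
    have "\<gamma> ! p \<noteq> \<gamma> ! q"
      using pq assms by (simp add: nth_eq_iff_index_eq)
    then show "\<gamma> ! p < \<gamma> ! q"
      using less pq by (meson linorder_neq_iff not_less_iff_gr_or_eq order.strict_trans)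
  qed
  also have "\<dots> \<longleftrightarrow> (\<forall>i\<in>set \<gamma>. \<forall>j\<in>set \<gamma>. Q i \<longrightarrow> Q j \<longrightarrow> i < j \<longrightarrow> pinv \<gamma> i < pinv \<gamma> j)"
    by (fastforce simp: in_set_conv_nth pinv_nth[OF assms])
  finally show ?thesis .
qed

lemma Sh_iff_filter:
  "\<gamma> \<in> Sh n m \<longleftrightarrow> length \<gamma> = n + m \<and> filter (\<lambda>v. v \<le> n) \<gamma> = [1..<n+1]
    \<and> filter (\<lambda>v. n < v) \<gamma> = [n+1..<n+m+1]" (is "_ \<longleftrightarrow> ?blocks")
proof -
  have "\<gamma> \<in> Sh n m \<longleftrightarrow> is_perm (n + m) \<gamma> \<and> sorted_wrt (<) (filter (\<lambda>v. v \<le> n) \<gamma>)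
      \<and> sorted_wrt (<) (filter (\<lambda>v. n < v) \<gamma>)"
  proof (cases "is_perm (n + m) \<gamma>")
    case True
    then have "distinct \<gamma>" "set \<gamma> = {1..n + m}"
      by (auto simp: is_perm_def intro: card_distinct)
    note sorted_iff = sorted_filter_iff_pinv_less[OF \<open>distinct \<gamma>\<close>]
    have "(\<forall>i j. 1 \<le> i \<and> i < j \<and> j \<le> n \<longrightarrow> pinv \<gamma> i < pinv \<gamma> j)
        \<longleftrightarrow> sorted_wrt (<) (filter (\<lambda>v. v \<le> n) \<gamma>)"
      unfolding sorted_iff using \<open>set \<gamma> = _\<close> by auto
    moreover have "(\<forall>i j. n + 1 \<le> i \<and> i < j \<and> j \<le> n + m \<longrightarrow> pinv \<gamma> i < pinv \<gamma> j)
        \<longleftrightarrow> sorted_wrt (<) (filter (\<lambda>v. n < v) \<gamma>)"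
      unfolding sorted_iff using \<open>set \<gamma> = _\<close> by auto
    ultimately show ?thesis
      using True by (simp add: Sh_def)
  qed (simp add: Sh_def)
  also have "\<dots> \<longleftrightarrow> ?blocks"
  proof
    assume perm_sorted: "is_perm (n + m) \<gamma> \<and> sorted_wrt (<) (filter (\<lambda>v. v \<le> n) \<gamma>)
      \<and> sorted_wrt (<) (filter (\<lambda>v. n < v) \<gamma>)"
    then have "set (filter (\<lambda>v. v \<le> n) \<gamma>) = set [1..<n+1]"
      and "set (filter (\<lambda>v. n < v) \<gamma>) = set [n+1..<n+m+1]"
      by (auto simp: is_perm_def)
    then show ?blocks
      using perm_sorted by (auto simp: is_perm_def sorted_wrt_upt intro!: strict_sorted_equal)
  next
    assume blocks: ?blocks
    have "set \<gamma> = set (filter (\<lambda>v. v \<le> n) \<gamma>) \<union> set (filter (\<lambda>v. n < v) \<gamma>)"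
      by auto
    also have "\<dots> = {1..n + m}"
      using blocks by (auto simp: atLeastLessThanSuc_atLeastAtMost)
    finally have "set \<gamma> = {1..n + m}" .
    then show "is_perm (n + m) \<gamma> \<and> sorted_wrt (<) (filter (\<lambda>v. v \<le> n) \<gamma>)
      \<and> sorted_wrt (<) (filter (\<lambda>v. n < v) \<gamma>)"
      using blocks by (simp add: is_perm_def sorted_wrt_upt)
  qed
  finally show ?thesis .
qed

lemma Sh_iff_merge:
  "\<gamma> \<in> Sh n m \<longleftrightarrow> (\<exists>c. mergeable c [1..<n+1] [n+1..<n+m+1] \<and> \<gamma> = merge c [1..<n+1] [n+1..<n+m+1])"
proof
  assume "\<gamma> \<in> Sh n m"
  then show "\<exists>c. mergeable c [1..<n+1] [n+1..<n+m+1] \<and> \<gamma> = merge c [1..<n+1] [n+1..<n+m+1]"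
    using merge_filter_partition[of "\<lambda>v. v \<le> n" \<gamma>] mergeable_filter_partition[of "\<lambda>v. v \<le> n" \<gamma>]
    by (auto simp: Sh_iff_filter not_le)
next
  assume "\<exists>c. mergeable c [1..<n+1] [n+1..<n+m+1] \<and> \<gamma> = merge c [1..<n+1] [n+1..<n+m+1]"
  then obtain c where c: "mergeable c [1..<n+1] [n+1..<n+m+1]"
    and \<gamma>: "\<gamma> = merge c [1..<n+1] [n+1..<n+m+1]"
    by blast
  then show "\<gamma> \<in> Sh n m"
    unfolding Sh_iff_filter \<gamma> using c
    by (auto simp: length_merge mergeable_length filter_merge_left filter_merge_right)
qed

lemma length_ptimes [simp]: "length (ptimes a b) = length a + length b"
  by (simp add: ptimes_def)

lemma length_idw [simp]: "length (idw n) = n"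
  by (simp add: idw_def)

lemma length_mtimes [simp]: "length (mtimes f r g) = length f + length g"
  by (simp add: mtimes_def)

lemma length_comp [simp]: "length (comp a b) = length b"
  by (simp add: comp_def)

lemma Sh_length: "\<gamma> \<in> Sh n m \<Longrightarrow> length \<gamma> = n + m"
  by (simp add: Sh_def is_perm_def)

lemma Sh_set: "\<gamma> \<in> Sh n m \<Longrightarrow> set \<gamma> = {1..n + m}"
  by (simp add: Sh_def is_perm_def)

lemma map_app_append_left: "map (app (A @ B)) [1..<length A + 1] = A"
  by (rule nth_equalityI) (auto simp: app_def nth_append)

lemma map_app_append_right: "map (app (A @ B)) [length A + 1..<length A + length B + 1] = B"
  by (rule nth_equalityI) (auto simp: app_def nth_append)

lemma map_app_upt: "map (app A) [1..<length A + 1] = A"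
  using map_app_append_left[of A "[]"] by simp

lemma comp_append_merge:
  assumes "length A = a" "a + length B = N"
  shows "comp (A @ B) (merge c [1..<a + 1] [a + 1..<N + 1]) = merge c A B"
  using assms map_app_append_left[of A B] map_app_append_right[of A B]
  by (simp add: comp_def map_merge)

lemma comp_assoc:
  "set B \<subseteq> {1..length A} \<Longrightarrow> comp (comp F A) B = comp F (comp A B)"
  by (auto simp: comp_def app_def subset_iff intro!: map_cong)

lemma mtimes_assoc: "mtimes f ra (mtimes g rb h) = mtimes (mtimes f ra g) (ra + rb) h"
  by (simp add: mtimes_def add.assoc)

lemma map_plus_upt: "map (\<lambda>v. v + a) [b..<c] = [b + a..<c + a]"
  by (rule nth_equalityI) auto

lemma mtimes_comp_right:
  assumes "set \<delta> \<subseteq> {1..length g}"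
  shows "mtimes f r (comp g \<delta>) = comp (mtimes f r g) (ptimes (idw (length f)) \<delta>)"
proof -
  have "comp (mtimes f r g) (ptimes (idw (length f)) \<delta>)
      = map (app (f @ map (\<lambda>v. v + r) g)) [1..<length f + 1]
        @ map (\<lambda>v. app (f @ map (\<lambda>v. v + r) g) (v + length f)) \<delta>"
    by (simp add: comp_def mtimes_def ptimes_def idw_def)
  also have "\<dots> = f @ map (\<lambda>v. app g v + r) \<delta>"
    unfolding map_app_append_left using assms by (auto simp: app_def nth_append subset_iff)
  finally show ?thesis
    by (simp add: mtimes_def comp_def)
qed

lemma mtimes_comp_left:
  assumes "length \<sigma> = length g" "set \<sigma> \<subseteq> {1..length g}"
  shows "mtimes (comp g \<sigma>) r h = comp (mtimes g r h) (ptimes \<sigma> (idw (length h)))"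
proof -
  have "comp (mtimes g r h) (ptimes \<sigma> (idw (length h)))
      = comp (mtimes g r h) \<sigma> @ map (app (g @ map (\<lambda>v. v + r) h)) [length g + 1..<length g + length h + 1]"
    using assms(1) by (simp add: comp_def mtimes_def ptimes_def idw_def map_plus_upt add.commute)
  also have "comp (mtimes g r h) \<sigma> = comp g \<sigma>"
    using assms by (auto simp: comp_def mtimes_def app_def nth_append subset_iff)
  finally show ?thesis
    using map_app_append_right[of g "map (\<lambda>v. v + r) h"] by (simp add: mtimes_def)
qed

lemma basis_op_assoc:
  assumes "length (fst a) = n" "length (fst b) = m" "length (fst c) = r"
    and \<gamma>: "\<gamma> \<in> Sh n (m + r)" and \<delta>: "\<delta> \<in> Sh m r" and \<sigma>: "\<sigma> \<in> Sh n m" and lam: "lam \<in> Sh (n + m) r"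
    and shuffle_eq: "comp (ptimes (idw n) \<delta>) \<gamma> = comp (ptimes \<sigma> (idw r)) lam"
  shows "basis_op \<gamma> a (basis_op \<delta> b c) = basis_op lam (basis_op \<sigma> a b) c"
proof -
  obtain f xs g ys h zs where abc: "a = (f, xs)" "b = (g, ys)" "c = (h, zs)"
    by (cases a, cases b, cases c) auto
  have lengths: "length f = n" "length g = m" "length h = r"
    using assms(1-3) abc by auto
  have "comp (mtimes f (length xs) (comp (mtimes g (length ys) h) \<delta>)) \<gamma>
      = comp (comp (mtimes f (length xs) (mtimes g (length ys) h)) (ptimes (idw n) \<delta>)) \<gamma>"
    using mtimes_comp_right[of \<delta> "mtimes g (length ys) h" f "length xs"] Sh_set[OF \<delta>] lengths
    by simp
  also have "\<dots> = comp (mtimes f (length xs) (mtimes g (length ys) h)) (comp (ptimes (idw n) \<delta>) \<gamma>)"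
    using Sh_set[OF \<gamma>] Sh_length[OF \<delta>] by (simp add: comp_assoc)
  also have "\<dots> = comp (mtimes (mtimes f (length xs) g) (length xs + length ys) h) (comp (ptimes \<sigma> (idw r)) lam)"
    by (simp add: shuffle_eq mtimes_assoc)
  also have "\<dots> = comp (comp (mtimes (mtimes f (length xs) g) (length xs + length ys) h) (ptimes \<sigma> (idw r))) lam"
    using Sh_set[OF lam] Sh_length[OF \<sigma>] by (simp add: comp_assoc)
  also have "\<dots> = comp (mtimes (comp (mtimes f (length xs) g) \<sigma>) (length xs + length ys) h) lam"
    using mtimes_comp_left[of \<sigma> "mtimes f (length xs) g" _ h] Sh_set[OF \<sigma>] Sh_length[OF \<sigma>] lengths
    by simp
  finally show ?thesis
    by (simp add: abc basis_op_def)
qed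

lemma fib_eq_count: "fib f i = count_list f i"
proof -
  have "{j. 1 \<le> j \<and> j \<le> length f \<and> app f j = i} = Suc ` {j. j < length f \<and> f ! j = i}"
    by (auto simp: app_def image_iff gr0_conv_Suc Suc_le_eq)
  then have "fib f i = card {j. j < length f \<and> f ! j = i}"
    by (simp add: fib_def card_image)
  then show ?thesis
    by (simp add: count_list_eq_length_filter length_filter_conv_card eq_commute)
qed

lemma fib_eq_length_filter: "fib f i = length (filter (\<lambda>v. v = i) f)"
  by (induction f) (auto simp: fib_eq_count)

lemma mset_comp_perm:
  assumes "is_perm (length F) \<gamma>"
  shows "mset (comp F \<gamma>) = mset F"
proof -
  have "distinct \<gamma>"
    using assms by (intro card_distinct) (auto simp: is_perm_def)
  moreover have "set \<gamma> = set [1..<length F + 1]"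
    using assms by (simp add: is_perm_def atLeastLessThanSuc_atLeastAtMost)
  ultimately have "mset \<gamma> = mset [1..<length F + 1]"
    by (subst set_eq_iff_mset_eq_distinct[symmetric]) simp_all
  then have "mset (comp F \<gamma>) = mset (map (app F) [1..<length F + 1])"
    by (simp add: comp_def)
  then show ?thesis
    by (simp only: map_app_upt)
qed

lemma count_list_mtimes:
  assumes "set f \<subseteq> {1..r}" "0 \<notin> set g"
  shows "count_list (mtimes f r g) i = (if i \<le> r then count_list f i else count_list g (i - r))"
proof -
  have "count_list (map (\<lambda>v. v + r) g) i = (if i \<le> r then 0 else count_list g (i - r))"
    using assms(2) by (induction g) auto
  moreover have "r < i \<Longrightarrow> count_list f i = 0"
    using assms(1) by (auto simp: count_list_0_iff)
  ultimately show ?thesis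
    by (simp add: mtimes_def)
qed

lemma basis_op_in_P:
  assumes a: "(f, xs) \<in> P n X" and b: "(g, ys) \<in> P m X" and \<gamma>: "\<gamma> \<in> Sh n m"
  shows "basis_op \<gamma> (f, xs) (g, ys) \<in> P (n + m) X"
proof -
  define F where "F = mtimes f (length xs) g"
  have f: "length f = n" "set f = {1..length xs}"
    and fib_f: "\<And>i. 1 \<le> i \<Longrightarrow> i \<le> length xs \<Longrightarrow> xs ! (i - 1) \<in> X (fib f i)"
    and g: "length g = m" "set g = {1..length ys}"
    and fib_g: "\<And>i. 1 \<le> i \<Longrightarrow> i \<le> length ys \<Longrightarrow> ys ! (i - 1) \<in> X (fib g i)"
    using a b by (auto simp: P_def)
  have "is_perm (length F) \<gamma>"
    using \<gamma> f g by (simp add: Sh_def F_def)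
  then have mset_F: "mset (comp F \<gamma>) = mset F"
    by (rule mset_comp_perm)
  have "set F = set f \<union> (\<lambda>v. v + length xs) ` set g"
    by (simp add: F_def mtimes_def)
  also have "\<dots> = {1..length xs + length ys}"
    unfolding f g by (auto simp: image_iff intro!: bexI[of _ "_ - length xs"])
  finally have set_F: "set (comp F \<gamma>) = {1..length (xs @ ys)}"
    using mset_F by (metis length_append set_mset_mset)
  have fib_F: "fib (comp F \<gamma>) i = (if i \<le> length xs then fib f i else fib g (i - length xs))" for i
    using mset_F count_list_mtimes[of f "length xs" g i] f g
    by (simp add: fib_eq_count F_def flip: count_mset)
  have "(xs @ ys) ! (i - 1) \<in> X (fib (comp F \<gamma>) i)" if "1 \<le> i" "i \<le> length (xs @ ys)" for i
  proof (cases "i \<le> length xs")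
    case True
    then have "i - 1 < length xs"
      using that by linarith
    then show ?thesis
      using True that fib_f[of i] by (simp add: fib_F nth_append)
  next
    case False
    then have "\<not> i - 1 < length xs" "i - 1 - length xs = i - length xs - 1"
      by linarith+
    then show ?thesis
      using False that fib_g[of "i - length xs"] by (simp add: fib_F nth_append)
  qed
  moreover have "1 \<le> length xs" "length xs \<le> n" "length ys \<le> m"
    using a b by (auto simp: P_def)
  ultimately show ?thesis
    using set_F Sh_length[OF \<gamma>] by (simp add: P_def basis_op_def F_def)
qed

section \<open>Decomposition of basis elements\<close>

definition head_shuffle :: "nat list \<Rightarrow> nat list" where
  "head_shuffle f = merge (map (\<lambda>v. v = 1) f) [1..<fib f 1 + 1] [fib f 1 + 1..<length f + 1]"

definition tail_map :: "nat list \<Rightarrow> nat list" where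
  "tail_map f = map (\<lambda>v. v - 1) (filter (\<lambda>v. v \<noteq> 1) f)"

lemma fib_le_length: "fib f i \<le> length f"
  by (simp add: fib_eq_count count_le_length)

lemma length_tail_map: "length (tail_map f) = length f - fib f 1"
  using sum_length_filter_compl[of "\<lambda>v. v = 1" f]
  by (simp add: tail_map_def fib_eq_length_filter)

lemma head_split:
  assumes "0 \<notin> set f"
  shows "head_shuffle f \<in> Sh (fib f 1) (length f - fib f 1)"
    and "comp (mtimes (replicate (fib f 1) 1) 1 (tail_map f)) (head_shuffle f) = f"
proof -
  define k where "k = fib f 1"
  define c where "c = map (\<lambda>v. v = 1) f"
  have k: "k = length (filter (\<lambda>v. v = 1) f)" "k \<le> length f"
    by (simp_all add: k_def fib_le_length fib_eq_length_filter)
  have c: "mergeable c [1..<k+1] [k+1..<length f+1]"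
    unfolding mergeable_iff_length c_def
    using sum_length_filter_compl[of "\<lambda>v. v = 1" f] k by (simp add: o_def)
  have shuffle: "head_shuffle f = merge c [1..<k+1] [k+1..<length f+1]"
    by (simp add: head_shuffle_def c_def k_def)
  show "head_shuffle f \<in> Sh (fib f 1) (length f - fib f 1)"
    unfolding Sh_iff_merge k_def[symmetric] using c shuffle k by auto
  have ones: "filter (\<lambda>v. v = 1) f = replicate k 1"
    unfolding k(1) by (induction f) auto
  have tail: "map (\<lambda>v. v + 1) (tail_map f) = filter (\<lambda>v. v \<noteq> 1) f"
  proof -
    have "v \<noteq> 0" if "v \<in> set f" for v
    proof
      assume "v = 0"
      then show False
        using assms that by simp
    qed
    then show ?thesis
      unfolding tail_map_def map_map o_def by (intro map_idI) auto
  qed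
  have "comp (mtimes (replicate k 1) 1 (tail_map f)) (head_shuffle f)
      = merge c (replicate k 1) (map (\<lambda>v. v + 1) (tail_map f))"
    unfolding shuffle mtimes_def using k(2)
    by (intro comp_append_merge) (simp_all add: length_tail_map k_def)
  also have "\<dots> = f"
    unfolding tail c_def ones[symmetric] by (rule merge_filter_partition)
  finally show "comp (mtimes (replicate (fib f 1) 1) 1 (tail_map f)) (head_shuffle f) = f"
    by (simp add: k_def)
qed

lemma head_split_generator:
  assumes \<gamma>: "\<gamma> \<in> Sh n m" and g: "length g = m" "0 \<notin> set g"
  defines "w \<equiv> comp (mtimes (replicate n 1) 1 g) \<gamma>"
  shows "fib w 1 = n" "head_shuffle w = \<gamma>" "tail_map w = g"
proof -
  obtain c where c: "mergeable c [1..<n+1] [n+1..<n+m+1]" and \<gamma>_eq: "\<gamma> = merge c [1..<n+1] [n+1..<n+m+1]"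
    using \<gamma> Sh_iff_merge by blast
  have w: "w = merge c (replicate n 1) (map (\<lambda>v. v + 1) g)"
    unfolding w_def \<gamma>_eq mtimes_def using g by (intro comp_append_merge) simp_all
  have c': "mergeable c (replicate n 1) (map (\<lambda>v. v + 1) g)"
    using c g by (simp add: mergeable_iff_length)
  have pattern: "map (\<lambda>v. v = 1) w = c"
    unfolding w by (rule map_merge_pattern[OF c']) (use g in \<open>auto intro: gr0I\<close>)
  have ones: "filter (\<lambda>v. v = 1) w = replicate n 1"
    unfolding w by (rule trans[OF filter_merge_left[OF c']]) (use g in \<open>auto intro: gr0I\<close>)
  have others: "filter (\<lambda>v. v \<noteq> 1) w = map (\<lambda>v. v + 1) g"
    unfolding w by (rule trans[OF filter_merge_right[OF c']]) (use g in \<open>auto intro: gr0I simp: filter_id_conv\<close>)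
  show n: "fib w 1 = n"
    using ones by (simp add: fib_eq_length_filter)
  have "length w = n + m"
    using Sh_length[OF \<gamma>] g by (simp add: w_def)
  then show "head_shuffle w = \<gamma>"
    unfolding head_shuffle_def n pattern \<gamma>_eq by simp
  show "tail_map w = g"
    unfolding tail_map_def others by (simp add: o_def)
qed

lemma singleton_in_P_iff: "(f, [x]) \<in> P n X \<longleftrightarrow> 1 \<le> n \<and> f = replicate n 1 \<and> x \<in> X n"
proof
  assume a: "(f, [x]) \<in> P n X"
  then have "length f = n" "set f = {1}" "x \<in> X (fib f 1)" "1 \<le> n"
    by (auto simp: P_def)
  moreover from this have "f = replicate n 1"
    by (metis replicate_length_same singletonD)
  ultimately show "1 \<le> n \<and> f = replicate n 1 \<and> x \<in> X n"
    by (simp add: fib_eq_length_filter)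
qed (auto simp: P_def fib_eq_length_filter)

lemma P_tail_map:
  assumes a: "(f, x # xs) \<in> P n X" and "xs \<noteq> []"
  shows "(tail_map f, xs) \<in> P (n - fib f 1) X"
proof -
  have f: "length f = n" "set f = {1..Suc (length xs)}"
    and fibers: "\<And>i. 1 \<le> i \<Longrightarrow> i \<le> Suc (length xs) \<Longrightarrow> (x # xs) ! (i - 1) \<in> X (fib f i)"
    using a by (auto simp: P_def)
  have set_tail: "set (tail_map f) = {1..length xs}"
  proof -
    have "set (tail_map f) = (\<lambda>v. v - 1) ` (set f - {1})"
      by (auto simp: tail_map_def)
    also have "\<dots> = {1..length xs}"
      unfolding f by (auto simp: image_iff intro!: bexI[of _ "Suc _"])
    finally show ?thesis .
  qed
  have "length xs \<le> length (tail_map f)"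
    using card_length[of "tail_map f"] set_tail by simp
  moreover have "fib (tail_map f) i = fib f (Suc i)" if "1 \<le> i" for i
  proof -
    have "filter (\<lambda>v. v = i) (tail_map f) = map (\<lambda>v. v - 1) (filter (\<lambda>v. v = Suc i) f)"
      unfolding tail_map_def filter_map filter_filter o_def using that
      by (intro arg_cong2[where f=map] filter_cong) auto
    then show ?thesis
      by (simp add: fib_eq_length_filter)
  qed
  moreover have "xs ! (i - 1) \<in> X (fib f (Suc i))" if "1 \<le> i" "i \<le> length xs" for i
    using fibers[of "Suc i"] that by (cases i) auto
  ultimately show ?thesis
    using \<open>xs \<noteq> []\<close> set_tail f(1)
    by (auto simp: P_def length_tail_map Suc_le_eq)
qed

lemma P_head_decomposition:
  assumes a: "(f, x # xs) \<in> P n X" and "xs \<noteq> []"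
  shows "head_shuffle f \<in> Sh (fib f 1) (n - fib f 1)"
    and "(replicate (fib f 1) 1, [x]) \<in> P (fib f 1) X"
    and "(tail_map f, xs) \<in> P (n - fib f 1) X"
    and "basis_op (head_shuffle f) (replicate (fib f 1) 1, [x]) (tail_map f, xs) = (f, x # xs)"
proof -
  have f: "length f = n" "set f = {1..Suc (length xs)}" and "x \<in> X (fib f 1)"
    using a by (auto simp: P_def)
  then have "0 \<notin> set f"
    by auto
  note split = head_split[OF this]
  show "head_shuffle f \<in> Sh (fib f 1) (n - fib f 1)"
    using split(1) f by simp
  show "basis_op (head_shuffle f) (replicate (fib f 1) 1, [x]) (tail_map f, xs) = (f, x # xs)"
    using split(2) by (simp add: basis_op_def)
  have "1 \<in> set f"
    using f by simp
  then have "1 \<le> fib f 1"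
    by (auto simp: fib_eq_length_filter Suc_le_eq filter_empty_conv)
  then show "(replicate (fib f 1) 1, [x]) \<in> P (fib f 1) X"
    using \<open>x \<in> X (fib f 1)\<close> by (simp add: singleton_in_P_iff)
  show "(tail_map f, xs) \<in> P (n - fib f 1) X"
    using assms by (rule P_tail_map)
qed

section \<open>Reassociating shuffles\<close>

definition Sh3 :: "nat \<Rightarrow> nat \<Rightarrow> nat \<Rightarrow> nat list set" where
  "Sh3 n m r = {\<theta>. length \<theta> = n + m + r \<and> filter (\<lambda>v. v \<le> n) \<theta> = [1..<n+1]
     \<and> filter (\<lambda>v. n < v \<and> v \<le> n + m) \<theta> = [n+1..<n+m+1]
     \<and> filter (\<lambda>v. n + m < v) \<theta> = [n+m+1..<n+m+r+1]}"

lemma comp_ptimes_idw_in_Sh3: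
  assumes \<sigma>: "\<sigma> \<in> Sh n m" and lam: "lam \<in> Sh (n + m) r"
  shows "comp (ptimes \<sigma> (idw r)) lam \<in> Sh3 n m r"
proof -
  define I where "I = [n+m+1..<n+m+r+1]"
  obtain c where c: "mergeable c [1..<n+m+1] I" and lam_eq: "lam = merge c [1..<n+m+1] I"
    using lam Sh_iff_merge unfolding I_def by blast
  have \<sigma>_len: "length \<sigma> = n + m"
    by (rule Sh_length[OF \<sigma>])
  have \<sigma>_set: "set \<sigma> = {1..n + m}"
    by (rule Sh_set[OF \<sigma>])
  have ptimes_eq: "ptimes \<sigma> (idw r) = \<sigma> @ I"
    by (simp add: ptimes_def idw_def I_def \<sigma>_len map_plus_upt add.commute)
  have \<theta>: "comp (ptimes \<sigma> (idw r)) lam = merge c \<sigma> I"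
    unfolding ptimes_eq lam_eq I_def using \<sigma>_len by (intro comp_append_merge) simp_all
  have c': "mergeable c \<sigma> I"
    using c \<sigma>_len by (simp add: mergeable_iff_length)
  have "filter (\<lambda>v. v \<le> n) (merge c \<sigma> I) = [1..<n+1]"
    using \<sigma> by (subst filter_merge_left[OF c']) (auto simp: I_def Sh_iff_filter)
  moreover have "filter (\<lambda>v. n < v \<and> v \<le> n + m) (merge c \<sigma> I) = [n+1..<n+m+1]"
  proof -
    have "filter (\<lambda>v. n < v \<and> v \<le> n + m) \<sigma> = filter (\<lambda>v. n < v) \<sigma>"
      using \<sigma>_set by (intro filter_cong) auto
    then show ?thesis
      using \<sigma> by (subst filter_merge_left[OF c']) (auto simp: I_def Sh_iff_filter)
  qed
  moreover have "filter (\<lambda>v. n + m < v) (merge c \<sigma> I) = I"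
    using \<sigma>_set by (subst filter_merge_right[OF c']) (auto simp: I_def)
  ultimately show ?thesis
    using c' \<sigma>_len by (simp add: \<theta> Sh3_def I_def length_merge mergeable_length)
qed

lemma Sh3_shifted_tail_in_Sh:
  assumes "\<theta> \<in> Sh3 n m r"
  shows "map (\<lambda>v. v - n) (filter (\<lambda>v. n < v) \<theta>) \<in> Sh m r"
proof -
  define \<delta> where "\<delta> = map (\<lambda>v. v - n) (filter (\<lambda>v. n < v) \<theta>)"
  have \<delta>_filter: "filter Q \<delta> = map (\<lambda>v. v - n) (filter (\<lambda>v. n < v \<and> Q (v - n)) \<theta>)" for Q
    unfolding \<delta>_def filter_map filter_filter o_def by (simp add: conj_commute)
  have upt_shift: "[n+a..<n+b] = map (\<lambda>v. v + n) [a..<b]" for a b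
    by (simp add: map_plus_upt add.commute)
  have "filter (\<lambda>v. v \<le> m) \<delta> = map (\<lambda>v. v - n) (filter (\<lambda>v. n < v \<and> v \<le> n + m) \<theta>)"
    unfolding \<delta>_filter by (intro arg_cong[where f="map _"] filter_cong) auto
  also have "\<dots> = [1..<m+1]"
    using assms upt_shift[of 1 "m + 1"] by (simp add: Sh3_def o_def add.assoc)
  finally have "filter (\<lambda>v. v \<le> m) \<delta> = [1..<m+1]" .
  moreover have "filter (\<lambda>v. m < v) \<delta> = map (\<lambda>v. v - n) (filter (\<lambda>v. n + m < v) \<theta>)"
    unfolding \<delta>_filter by (intro arg_cong[where f="map _"] filter_cong) auto
  moreover have "\<dots> = [m+1..<m+r+1]"
    using assms upt_shift[of "m + 1" "m + r + 1"] by (simp add: Sh3_def o_def add.assoc)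
  moreover have "length \<delta> = m + r"
    using sum_length_filter_compl[of "\<lambda>v. v \<le> m" \<delta>] calculation by (simp add: not_le)
  ultimately show ?thesis
    by (simp add: Sh_iff_filter \<delta>_def)
qed

lemma Sh3_factor_left:
  assumes \<theta>: "\<theta> \<in> Sh3 n m r"
  obtains \<gamma> \<delta> where "\<gamma> \<in> Sh n (m + r)" "\<delta> \<in> Sh m r" "comp (ptimes (idw n) \<delta>) \<gamma> = \<theta>"
proof -
  have len: "length \<theta> = n + m + r" and first: "filter (\<lambda>v. v \<le> n) \<theta> = [1..<n+1]"
    using \<theta> by (auto simp: Sh3_def)
  define c where "c = map (\<lambda>v. v \<le> n) \<theta>"
  define \<gamma> where "\<gamma> = merge c [1..<n+1] [n+1..<n+(m+r)+1]"
  define \<delta> where "\<delta> = map (\<lambda>v. v - n) (filter (\<lambda>v. n < v) \<theta>)"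
  have c: "mergeable c [1..<n+1] [n+1..<n+(m+r)+1]"
    using sum_length_filter_compl[of "\<lambda>v. v \<le> n" \<theta>] len first
    by (simp add: mergeable_iff_length c_def o_def)
  then have "\<gamma> \<in> Sh n (m + r)"
    unfolding Sh_iff_merge \<gamma>_def by blast
  have "\<delta> \<in> Sh m r"
    unfolding \<delta>_def by (rule Sh3_shifted_tail_in_Sh[OF \<theta>])
  have shift: "map (\<lambda>v. v + n) \<delta> = filter (\<lambda>v. n < v) \<theta>"
    unfolding \<delta>_def map_map o_def by (rule map_idI) auto
  have ptimes_eq: "ptimes (idw n) \<delta> = [1..<n+1] @ map (\<lambda>v. v + n) \<delta>"
    by (simp add: ptimes_def idw_def)
  have "comp (ptimes (idw n) \<delta>) \<gamma> = merge c [1..<n+1] (map (\<lambda>v. v + n) \<delta>)"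
    unfolding ptimes_eq \<gamma>_def using Sh_length[OF \<open>\<delta> \<in> Sh m r\<close>] by (intro comp_append_merge) simp_all
  also have "\<dots> = merge c (filter (\<lambda>v. v \<le> n) \<theta>) (filter (\<lambda>v. \<not> v \<le> n) \<theta>)"
    by (simp add: first shift not_le)
  also have "\<dots> = \<theta>"
    unfolding c_def by (rule merge_filter_partition)
  finally show ?thesis
    using that \<open>\<gamma> \<in> Sh n (m + r)\<close> \<open>\<delta> \<in> Sh m r\<close> by blast
qed

lemma Sh_reassociate:
  assumes "\<sigma> \<in> Sh n m" "lam \<in> Sh (n + m) r"
  obtains \<gamma> \<delta> where "\<gamma> \<in> Sh n (m + r)" "\<delta> \<in> Sh m r"
    "comp (ptimes (idw n) \<delta>) \<gamma> = comp (ptimes \<sigma> (idw r)) lam"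
  using Sh3_factor_left[OF comp_ptimes_idw_in_Sh3[OF assms]] by metis

lemma basis_op_head_reassoc:
  assumes a: "(f, x # xs) \<in> P n X" "xs \<noteq> []" and b: "(g, ys) \<in> P m X" and \<gamma>: "\<gamma> \<in> Sh n m"
  obtains \<gamma>' \<delta> where "\<gamma>' \<in> Sh (fib f 1) (n - fib f 1 + m)" "\<delta> \<in> Sh (n - fib f 1) m"
    "comp (ptimes (idw (fib f 1)) \<delta>) \<gamma>' = comp (ptimes (head_shuffle f) (idw m)) \<gamma>"
    "basis_op \<gamma> (f, x # xs) (g, ys)
      = basis_op \<gamma>' (replicate (fib f 1) 1, [x]) (basis_op \<delta> (tail_map f, xs) (g, ys))"
proof -
  define k where "k = fib f 1"
  note split = P_head_decomposition[OF a, folded k_def]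
  have "k + (n - k) = n"
    using a fib_le_length[of f 1] by (auto simp: P_def k_def)
  then have \<gamma>': "\<gamma> \<in> Sh (k + (n - k)) m"
    using \<gamma> by simp
  obtain \<gamma>' \<delta> where shuffles: "\<gamma>' \<in> Sh k (n - k + m)" "\<delta> \<in> Sh (n - k) m"
    and shuffle_eq: "comp (ptimes (idw k) \<delta>) \<gamma>' = comp (ptimes (head_shuffle f) (idw m)) \<gamma>"
    using Sh_reassociate[OF split(1) \<gamma>'] by blast
  have "length (fst (replicate k 1, [x])) = k" "length (fst (tail_map f, xs)) = n - k"
    "length (fst (g, ys)) = m"
    using split(3) b by (auto simp: P_def)
  from basis_op_assoc[OF this shuffles split(1) \<gamma>' shuffle_eq] show ?thesis
    using that shuffles shuffle_eq split(4) by (simp add: k_def)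
qed

lemma lookup_fscale [simp]: "Poly_Mapping.lookup (fscale c p) a = c * Poly_Mapping.lookup p a"
  by (simp add: fscale_def Poly_Mapping.map.rep_eq when_def)

lemma keys_fscale: "Poly_Mapping.keys (fscale c p) \<subseteq> Poly_Mapping.keys p"
  by (auto simp: in_keys_iff)

lemma fscale_single: "fscale c (Poly_Mapping.single a d) = Poly_Mapping.single a (c * d)"
  by (rule poly_mapping_eqI) (simp add: lookup_single when_def)

lemma module_fscale: "module (fscale :: 'k::field \<Rightarrow> ('s \<Rightarrow>\<^sub>0 'k) \<Rightarrow> _)"
  by unfold_locales (auto intro!: poly_mapping_eqI simp: lookup_add algebra_simps)

lemma sum_single_lookup: "(\<Sum>a\<in>Poly_Mapping.keys u. Poly_Mapping.single a (Poly_Mapping.lookup u a)) = u"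
proof (rule poly_mapping_eqI)
  fix k
  have "Poly_Mapping.lookup (\<Sum>a\<in>Poly_Mapping.keys u. Poly_Mapping.single a (Poly_Mapping.lookup u a)) k
      = (\<Sum>a\<in>Poly_Mapping.keys u. if a = k then Poly_Mapping.lookup u a else 0)"
    unfolding lookup_sum by (intro sum.cong refl) (simp add: lookup_single when_def)
  also have "\<dots> = Poly_Mapping.lookup u k"
    by (simp add: in_keys_iff)
  finally show "Poly_Mapping.lookup (\<Sum>a\<in>Poly_Mapping.keys u. Poly_Mapping.single a (Poly_Mapping.lookup u a)) k
      = Poly_Mapping.lookup u k" .
qed

definition bilin_ext :: "('s \<Rightarrow> 't \<Rightarrow> 'u) \<Rightarrow> ('s \<Rightarrow>\<^sub>0 'k::field) \<Rightarrow> ('t \<Rightarrow>\<^sub>0 'k) \<Rightarrow> ('u \<Rightarrow>\<^sub>0 'k)" where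
  "bilin_ext h p q = (\<Sum>a\<in>Poly_Mapping.keys p. \<Sum>b\<in>Poly_Mapping.keys q.
       Poly_Mapping.single (h a b) (Poly_Mapping.lookup p a * Poly_Mapping.lookup q b))"

lemma fop_eq_bilin_ext: "fop n m \<gamma> = bilin_ext (basis_op \<gamma>)"
  by (simp add: fun_eq_iff fop_def bilin_ext_def)

lemma bilin_ext_superset:
  assumes "finite A" "Poly_Mapping.keys p \<subseteq> A" "finite C" "Poly_Mapping.keys q \<subseteq> C"
  shows "bilin_ext h p q = (\<Sum>a\<in>A. \<Sum>b\<in>C.
      Poly_Mapping.single (h a b) (Poly_Mapping.lookup p a * Poly_Mapping.lookup q b))"
proof -
  have "bilin_ext h p q = (\<Sum>a\<in>A. \<Sum>b\<in>Poly_Mapping.keys q.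
      Poly_Mapping.single (h a b) (Poly_Mapping.lookup p a * Poly_Mapping.lookup q b))"
    unfolding bilin_ext_def by (rule sum.mono_neutral_left) (use assms in \<open>auto simp: in_keys_iff\<close>)
  also have "\<dots> = (\<Sum>a\<in>A. \<Sum>b\<in>C.
      Poly_Mapping.single (h a b) (Poly_Mapping.lookup p a * Poly_Mapping.lookup q b))"
    by (intro sum.cong refl sum.mono_neutral_left) (use assms in \<open>auto simp: in_keys_iff\<close>)
  finally show ?thesis .
qed

lemma bilin_ext_swap: "bilin_ext h p q = bilin_ext (\<lambda>b a. h a b) q p"
  unfolding bilin_ext_def by (subst sum.swap) (simp add: mult.commute)

lemma bilin_ext_add_left: "bilin_ext h (p + p') q = bilin_ext h p q + bilin_ext h p' q"
proof -
  let ?A = "Poly_Mapping.keys p \<union> Poly_Mapping.keys p'" and ?C = "Poly_Mapping.keys q"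
  have "bilin_ext h (p + p') q = (\<Sum>a\<in>?A. \<Sum>b\<in>?C.
      Poly_Mapping.single (h a b) (Poly_Mapping.lookup (p + p') a * Poly_Mapping.lookup q b))"
    by (rule bilin_ext_superset) (auto simp: keys_add)
  also have "\<dots> = bilin_ext h p q + bilin_ext h p' q"
    by (simp add: bilin_ext_superset[where A="?A" and C="?C"] lookup_add distrib_right single_add sum.distrib)
  finally show ?thesis .
qed

lemma bilin_ext_add_right: "bilin_ext h p (q + q') = bilin_ext h p q + bilin_ext h p q'"
  by (subst (1 2 3) bilin_ext_swap) (rule bilin_ext_add_left)

lemma bilin_ext_scale_left: "bilin_ext h (fscale c p) q = fscale c (bilin_ext h p q)"
proof -
  have "bilin_ext h (fscale c p) q = (\<Sum>a\<in>Poly_Mapping.keys p. \<Sum>b\<in>Poly_Mapping.keys q.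
      Poly_Mapping.single (h a b) (Poly_Mapping.lookup (fscale c p) a * Poly_Mapping.lookup q b))"
    by (rule bilin_ext_superset) (auto simp: keys_fscale)
  then show ?thesis
    by (simp add: bilin_ext_def module.scale_sum_right[OF module_fscale] fscale_single mult.assoc)
qed

lemma bilin_ext_scale_right: "bilin_ext h p (fscale c q) = fscale c (bilin_ext h p q)"
  by (subst (1 2) bilin_ext_swap) (rule bilin_ext_scale_left)

lemma bilin_ext_single_single:
  "bilin_ext h (Poly_Mapping.single a c) (Poly_Mapping.single b d) = Poly_Mapping.single (h a b) (c * d)"
  by (subst bilin_ext_superset[where A="{a}" and C="{b}"]) auto

lemma bilin_ext_single_left:
  "bilin_ext h (Poly_Mapping.single a c) q
    = (\<Sum>b\<in>Poly_Mapping.keys q. Poly_Mapping.single (h a b) (c * Poly_Mapping.lookup q b))"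
  by (subst bilin_ext_superset[where A="{a}" and C="Poly_Mapping.keys q"]) auto

lemma bilin_ext_single_right:
  "bilin_ext h p (Poly_Mapping.single b d)
    = (\<Sum>a\<in>Poly_Mapping.keys p. Poly_Mapping.single (h a b) (Poly_Mapping.lookup p a * d))"
  by (subst bilin_ext_superset[where A="Poly_Mapping.keys p" and C="{b}"]) auto

lemma bilin_ext_zero_left [simp]: "bilin_ext h 0 q = 0"
  by (simp add: bilin_ext_def)

lemma bilin_ext_sum_left: "bilin_ext h (sum f I) q = (\<Sum>i\<in>I. bilin_ext h (f i) q)"
  by (induction I rule: infinite_finite_induct) (auto simp: bilin_ext_add_left)

lemma bilin_ext_sum_right: "bilin_ext h p (sum f I) = (\<Sum>i\<in>I. bilin_ext h p (f i))"
  by (subst (1 2) bilin_ext_swap) (rule bilin_ext_sum_left)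

lemma keys_bilin_ext:
  "Poly_Mapping.keys (bilin_ext h p q) \<subseteq> {h a b | a b. a \<in> Poly_Mapping.keys p \<and> b \<in> Poly_Mapping.keys q}"
  unfolding bilin_ext_def by (fastforce dest!: subsetD[OF keys_sum] split: if_splits)

lemma bilin_ext_assoc:
  assumes "\<And>a b c. a \<in> Poly_Mapping.keys p \<Longrightarrow> b \<in> Poly_Mapping.keys q \<Longrightarrow> c \<in> Poly_Mapping.keys s
    \<Longrightarrow> h1 a (h2 b c) = h3 (h4 a b) c"
  shows "bilin_ext h1 p (bilin_ext h2 q s) = bilin_ext h3 (bilin_ext h4 p q) s"
proof -
  let ?p = "Poly_Mapping.lookup p" and ?q = "Poly_Mapping.lookup q" and ?s = "Poly_Mapping.lookup s"
  have "bilin_ext h1 p (bilin_ext h2 q s) = (\<Sum>b\<in>Poly_Mapping.keys q. \<Sum>c\<in>Poly_Mapping.keys s.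
      \<Sum>a\<in>Poly_Mapping.keys p. Poly_Mapping.single (h1 a (h2 b c)) (?p a * (?q b * ?s c)))"
    by (simp add: bilin_ext_def[of h2] bilin_ext_sum_right bilin_ext_single_right)
  also have "\<dots> = (\<Sum>b\<in>Poly_Mapping.keys q. \<Sum>c\<in>Poly_Mapping.keys s.
      \<Sum>a\<in>Poly_Mapping.keys p. Poly_Mapping.single (h3 (h4 a b) c) (?p a * ?q b * ?s c))"
    using assms by (intro sum.cong refl) (simp add: mult.assoc)
  also have "\<dots> = (\<Sum>a\<in>Poly_Mapping.keys p. \<Sum>b\<in>Poly_Mapping.keys q.
      \<Sum>c\<in>Poly_Mapping.keys s. Poly_Mapping.single (h3 (h4 a b) c) (?p a * ?q b * ?s c))"
    by (subst sum.swap) (rule sum.cong[OF refl], rule sum.swap)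
  also have "\<dots> = bilin_ext h3 (bilin_ext h4 p q) s"
    by (simp add: bilin_ext_def[of h4] bilin_ext_sum_left bilin_ext_single_left)
  finally show ?thesis .
qed

lemma FA_subspace: "module.subspace (fscale :: 'k::field \<Rightarrow> _) (FA X n)"
  unfolding module.subspace_def[OF module_fscale] FA_def
  by (auto dest!: subsetD[OF keys_add] subsetD[OF keys_fscale])

lemma single_in_FA: "a \<in> P n X \<Longrightarrow> Poly_Mapping.single a c \<in> FA X n"
  by (simp add: FA_def)

lemma fop_in_FA: "\<gamma> \<in> Sh n m \<Longrightarrow> u \<in> FA X n \<Longrightarrow> v \<in> FA X m \<Longrightarrow> fop n m \<gamma> u v \<in> FA X (n + m)"
  unfolding FA_def fop_eq_bilin_ext
  using keys_bilin_ext[of "basis_op \<gamma>" u v] basis_op_in_P[of "fst _" "snd _" n X "fst _" "snd _" m \<gamma>]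
  by fastforce

lemma FA_shuffle_algebra: "shuffle_algebra (fscale :: 'k::field \<Rightarrow> _) (FA X) fop"
  unfolding shuffle_algebra_def graded_vs_def
proof (intro conjI allI impI ballI)
  show "vector_space (fscale :: 'k \<Rightarrow> _)"
    using module_fscale module_iff_vector_space by blast
  show "module.subspace fscale (FA X n)" for n
    by (rule FA_subspace)
  show "fop n m \<gamma> u v \<in> FA X (n + m)" if "\<gamma> \<in> Sh n m" "u \<in> FA X n" "v \<in> FA X m" for n m \<gamma> u v
    using that by (rule fop_in_FA)
  show "lin_on fscale fscale (FA X n) (\<lambda>u. fop n m \<gamma> u v)" for n m \<gamma> v
    unfolding lin_on_def fop_eq_bilin_ext by (simp add: bilin_ext_add_left bilin_ext_scale_left)
  show "lin_on fscale fscale (FA X m) (\<lambda>v. fop n m \<gamma> u v)" for n m \<gamma> u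
    unfolding lin_on_def fop_eq_bilin_ext by (simp add: bilin_ext_add_right bilin_ext_scale_right)
next
  fix n m r \<gamma> \<delta> \<sigma> lam and u v w :: "(nat list \<times> 'a list) \<Rightarrow>\<^sub>0 'k"
  assume shuffles: "\<gamma> \<in> Sh n (m + r) \<and> \<delta> \<in> Sh m r \<and> \<sigma> \<in> Sh n m \<and> lam \<in> Sh (n + m) r
      \<and> comp (ptimes (idw n) \<delta>) \<gamma> = comp (ptimes \<sigma> (idw r)) lam"
    and "u \<in> FA X n" "v \<in> FA X m" "w \<in> FA X r"
  then have "length (fst a) = n" "length (fst b) = m" "length (fst c) = r"
    if "a \<in> Poly_Mapping.keys u" "b \<in> Poly_Mapping.keys v" "c \<in> Poly_Mapping.keys w" for a b c
    using that by (auto simp: FA_def P_def)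
  then show "fop n (m + r) \<gamma> u (fop m r \<delta> v w) = fop (n + m) r lam (fop n m \<sigma> u v) w"
    unfolding fop_eq_bilin_ext using shuffles by (intro bilin_ext_assoc basis_op_assoc) auto
qed

section \<open>The universal property\<close>

lemma shuffle_algebra_module: "shuffle_algebra s A op \<Longrightarrow> module s"
  by (simp add: shuffle_algebra_def graded_vs_def module_iff_vector_space)

lemma shuffle_algebra_subspace: "shuffle_algebra s A op \<Longrightarrow> module.subspace s (A n)"
  by (simp add: shuffle_algebra_def graded_vs_def)

lemma shuffle_algebra_closed:
  "shuffle_algebra s A op \<Longrightarrow> \<gamma> \<in> Sh n m \<Longrightarrow> x \<in> A n \<Longrightarrow> y \<in> A m \<Longrightarrow> op n m \<gamma> x y \<in> A (n + m)"
  by (simp add: shuffle_algebra_def)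

lemma shuffle_algebra_lin_left:
  "shuffle_algebra s A op \<Longrightarrow> \<gamma> \<in> Sh n m \<Longrightarrow> y \<in> A m \<Longrightarrow> lin_on s s (A n) (\<lambda>x. op n m \<gamma> x y)"
  by (simp add: shuffle_algebra_def)

lemma shuffle_algebra_lin_right:
  "shuffle_algebra s A op \<Longrightarrow> \<gamma> \<in> Sh n m \<Longrightarrow> x \<in> A n \<Longrightarrow> lin_on s s (A m) (\<lambda>y. op n m \<gamma> x y)"
  by (simp add: shuffle_algebra_def)

lemma shuffle_algebra_assoc:
  "shuffle_algebra s A op \<Longrightarrow> \<gamma> \<in> Sh n (m + r) \<Longrightarrow> \<delta> \<in> Sh m r \<Longrightarrow> \<sigma> \<in> Sh n m \<Longrightarrow> lam \<in> Sh (n + m) r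
  \<Longrightarrow> comp (ptimes (idw n) \<delta>) \<gamma> = comp (ptimes \<sigma> (idw r)) lam \<Longrightarrow> x \<in> A n \<Longrightarrow> y \<in> A m \<Longrightarrow> z \<in> A r
  \<Longrightarrow> op n (m + r) \<gamma> x (op m r \<delta> y z) = op (n + m) r lam (op n m \<sigma> x y) z"
  unfolding shuffle_algebra_def by blast

lemma lin_on_zero: "lin_on s1 s2 S f \<Longrightarrow> 0 \<in> S \<Longrightarrow> f 0 = 0"
  unfolding lin_on_def by (metis add_0 add_cancel_right_right)

lemma lin_on_sum:
  assumes "module s1" "module.subspace s1 S" "lin_on s1 s2 S f" "\<And>i. i \<in> I \<Longrightarrow> x i \<in> S"
  shows "f (sum x I) = (\<Sum>i\<in>I. f (x i))"
  using assms(4)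
proof (induction I rule: infinite_finite_induct)
  case (insert i I)
  then have "sum x I \<in> S"
    using module.subspace_sum[OF assms(1,2)] by blast
  then show ?case
    using insert assms(3) by (simp add: lin_on_def)
qed (use lin_on_zero[OF assms(3) module.subspace_0[OF assms(1,2)]] in auto)

definition lin_ext :: "('k::field \<Rightarrow> 'v::ab_group_add \<Rightarrow> 'v) \<Rightarrow> ('s \<Rightarrow> 'v) \<Rightarrow> ('s \<Rightarrow>\<^sub>0 'k) \<Rightarrow> 'v" where
  "lin_ext s g u = (\<Sum>a\<in>Poly_Mapping.keys u. s (Poly_Mapping.lookup u a) (g a))"

lemma lin_ext_superset:
  assumes "module s" "finite A" "Poly_Mapping.keys u \<subseteq> A"
  shows "lin_ext s g u = (\<Sum>a\<in>A. s (Poly_Mapping.lookup u a) (g a))"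
  unfolding lin_ext_def
  by (rule sum.mono_neutral_left) (use assms module.scale_zero_left in \<open>auto simp: in_keys_iff\<close>)

lemma lin_ext_add: "module s \<Longrightarrow> lin_ext s g (u + v) = lin_ext s g u + lin_ext s g v"
  by (simp add: lin_ext_superset[where A="Poly_Mapping.keys u \<union> Poly_Mapping.keys v"] keys_add
      lookup_add module.scale_left_distrib sum.distrib)

lemma lin_ext_scale: "module s \<Longrightarrow> lin_ext s g (fscale c u) = s c (lin_ext s g u)"
  by (simp add: lin_ext_superset[where A="Poly_Mapping.keys u"] keys_fscale
      module.scale_sum_right module.scale_scale)

lemma lin_ext_single: "module s \<Longrightarrow> lin_ext s g (Poly_Mapping.single a c) = s c (g a)"
  by (simp add: lin_ext_superset[where A="{a}"])

lemma lin_ext_zero [simp]: "lin_ext s g 0 = 0"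
  by (simp add: lin_ext_def)

lemma lin_ext_sum: "module s \<Longrightarrow> lin_ext s g (sum f I) = (\<Sum>i\<in>I. lin_ext s g (f i))"
  by (induction I rule: infinite_finite_induct) (auto simp: lin_ext_add)

lemma lin_ext_in_subspace:
  assumes "module s" "module.subspace s S" "\<And>a. a \<in> Poly_Mapping.keys u \<Longrightarrow> g a \<in> S"
  shows "lin_ext s g u \<in> S"
  unfolding lin_ext_def using assms
  by (intro module.subspace_sum[OF assms(1,2)] module.subspace_scale[OF assms(1,2)])

lemma shuffle_algebra_op_sum:
  assumes A: "shuffle_algebra s A op" and \<gamma>: "\<gamma> \<in> Sh n m"
    and x: "\<And>a. a \<in> I \<Longrightarrow> x a \<in> A n" and y: "\<And>b. b \<in> J \<Longrightarrow> y b \<in> A m"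
  shows "op n m \<gamma> (\<Sum>a\<in>I. s (c a) (x a)) (\<Sum>b\<in>J. s (d b) (y b))
       = (\<Sum>a\<in>I. \<Sum>b\<in>J. s (c a * d b) (op n m \<gamma> (x a) (y b)))"
proof -
  note md = shuffle_algebra_module[OF A] and sub = shuffle_algebra_subspace[OF A]
  have "(\<Sum>b\<in>J. s (d b) (y b)) \<in> A m"
    using y by (intro module.subspace_sum[OF md sub] module.subspace_scale[OF md sub])
  then have "op n m \<gamma> (\<Sum>a\<in>I. s (c a) (x a)) (\<Sum>b\<in>J. s (d b) (y b))
      = (\<Sum>a\<in>I. s (c a) (op n m \<gamma> (x a) (\<Sum>b\<in>J. s (d b) (y b))))"
    using shuffle_algebra_lin_left[OF A \<gamma>] x
    by (subst lin_on_sum[OF md sub]) (auto simp: module.subspace_scale[OF md sub] lin_on_def)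
  also have "\<dots> = (\<Sum>a\<in>I. s (c a) (\<Sum>b\<in>J. s (d b) (op n m \<gamma> (x a) (y b))))"
    using shuffle_algebra_lin_right[OF A \<gamma>] x y
    by (intro sum.cong refl arg_cong[where f="s _"], subst lin_on_sum[OF md sub])
      (auto simp: module.subspace_scale[OF md sub] lin_on_def)
  also have "\<dots> = (\<Sum>a\<in>I. \<Sum>b\<in>J. s (c a * d b) (op n m \<gamma> (x a) (y b)))"
    by (simp add: module.scale_sum_right[OF md] module.scale_scale[OF md])
  finally show ?thesis .
qed

fun eval_basis :: "(nat \<Rightarrow> 'x \<Rightarrow> 'v::zero) \<Rightarrow> (nat \<Rightarrow> nat \<Rightarrow> nat list \<Rightarrow> 'v \<Rightarrow> 'v \<Rightarrow> 'v)
    \<Rightarrow> nat list \<times> 'x list \<Rightarrow> 'v" where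
  "eval_basis \<phi> op (f, []) = 0"
| "eval_basis \<phi> op (f, [x]) = \<phi> (length f) x"
| "eval_basis \<phi> op (f, x # y # ys) = op (fib f 1) (length f - fib f 1) (head_shuffle f)
     (\<phi> (fib f 1) x) (eval_basis \<phi> op (tail_map f, y # ys))"

lemma eval_basis_in:
  assumes A: "shuffle_algebra s A op" and \<phi>: "\<forall>n\<ge>1. \<forall>x\<in>X n. \<phi> n x \<in> A n"
  shows "(f, xs) \<in> P n X \<Longrightarrow> eval_basis \<phi> op (f, xs) \<in> A n"
proof (induction xs arbitrary: f n rule: induct_list012)
  case 1
  then show ?case
    by (simp add: P_def)
next
  case (2 x)
  then show ?case
    using \<phi> by (auto simp: singleton_in_P_iff)
next
  case (3 x y ys)
  note split = P_head_decomposition[OF "3.prems" list.distinct(2)]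
  have "eval_basis \<phi> op (tail_map f, y # ys) \<in> A (n - fib f 1)"
    using split(3) by (rule "3.IH"(2))
  moreover have "\<phi> (fib f 1) x \<in> A (fib f 1)"
    using split(2) \<phi> by (simp add: singleton_in_P_iff)
  moreover have "length f = n" "fib f 1 \<le> n"
    using "3.prems" fib_le_length[of f 1] by (auto simp: P_def)
  ultimately show ?case
    using shuffle_algebra_closed[OF A split(1)] by auto
qed

lemma eval_basis_generator_op:
  assumes "\<gamma> \<in> Sh n m" "(g, ys) \<in> P m X"
  shows "eval_basis \<phi> op (basis_op \<gamma> (replicate n 1, [x]) (g, ys))
    = op n m \<gamma> (\<phi> n x) (eval_basis \<phi> op (g, ys))"
proof -
  obtain y ys' where ys: "ys = y # ys'"
    using assms(2) by (cases ys) (auto simp: P_def)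
  have "length g = m" "0 \<notin> set g"
    using assms(2) by (auto simp: P_def)
  note split = head_split_generator[OF assms(1) this]
  show ?thesis
    using split Sh_length[OF assms(1)] by (simp add: basis_op_def ys)
qed

lemma eval_basis_basis_op:
  assumes A: "shuffle_algebra s A op" and \<phi>: "\<forall>n\<ge>1. \<forall>x\<in>X n. \<phi> n x \<in> A n"
    and b: "(g, ys) \<in> P m X"
  shows "(f, xs) \<in> P n X \<Longrightarrow> \<gamma> \<in> Sh n m \<Longrightarrow> eval_basis \<phi> op (basis_op \<gamma> (f, xs) (g, ys))
    = op n m \<gamma> (eval_basis \<phi> op (f, xs)) (eval_basis \<phi> op (g, ys))"
proof (induction xs arbitrary: f n \<gamma> rule: induct_list012)
  case 1
  then show ?case
    by (simp add: P_def)
next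
  case (2 x)
  then show ?case
    using eval_basis_generator_op[OF _ b] by (auto simp: singleton_in_P_iff)
next
  case (3 x y zs)
  define k where "k = fib f 1"
  define t where "t = (tail_map f, y # zs)"
  note split = P_head_decomposition[OF "3.prems"(1) list.distinct(2), folded k_def t_def]
  obtain \<gamma>' \<delta> where shuffles: "\<gamma>' \<in> Sh k (n - k + m)" "\<delta> \<in> Sh (n - k) m"
    and shuffle_eq: "comp (ptimes (idw k) \<delta>) \<gamma>' = comp (ptimes (head_shuffle f) (idw m)) \<gamma>"
    and reassoc: "basis_op \<gamma> (f, x # y # zs) (g, ys) = basis_op \<gamma>' (replicate k 1, [x]) (basis_op \<delta> t (g, ys))"
    using basis_op_head_reassoc[OF "3.prems"(1) list.distinct(2) b "3.prems"(2)] unfolding k_def t_def .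
  obtain h ws where tb: "basis_op \<delta> t (g, ys) = (h, ws)"
    by fastforce
  have "k + (n - k) = n"
    using "3.prems"(1) fib_le_length[of f 1] by (auto simp: P_def k_def)
  then have \<gamma>: "\<gamma> \<in> Sh (k + (n - k)) m"
    using "3.prems"(2) by simp
  have "eval_basis \<phi> op (basis_op \<gamma> (f, x # y # zs) (g, ys))
      = op k (n - k + m) \<gamma>' (\<phi> k x) (eval_basis \<phi> op (h, ws))"
    using eval_basis_generator_op[OF shuffles(1)] basis_op_in_P[OF split(3)[unfolded t_def] b shuffles(2)]
    by (simp add: reassoc tb[unfolded t_def] t_def)
  also have "\<dots> = op k (n - k + m) \<gamma>' (\<phi> k x)
      (op (n - k) m \<delta> (eval_basis \<phi> op t) (eval_basis \<phi> op (g, ys)))"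
    using "3.IH"(2)[OF split(3)[unfolded t_def] shuffles(2)] tb by (simp add: t_def)
  also have "\<dots> = op (k + (n - k)) m \<gamma> (op k (n - k) (head_shuffle f) (\<phi> k x) (eval_basis \<phi> op t))
      (eval_basis \<phi> op (g, ys))"
  proof (rule shuffle_algebra_assoc[OF A shuffles split(1) \<gamma> shuffle_eq])
    show "\<phi> k x \<in> A k"
      using split(2) \<phi> by (simp add: singleton_in_P_iff)
    show "eval_basis \<phi> op t \<in> A (n - k)"
      using eval_basis_in[OF A \<phi>] split(3) by (simp add: t_def)
    show "eval_basis \<phi> op (g, ys) \<in> A m"
      by (rule eval_basis_in[OF A \<phi> b])
  qed
  also have "\<dots> = op n m \<gamma> (eval_basis \<phi> op (f, x # y # zs)) (eval_basis \<phi> op (g, ys))"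
    using \<open>k + (n - k) = n\<close> "3.prems"(1) by (simp add: P_def k_def t_def)
  finally show ?case .
qed

lemma lin_ext_eval_basis_shuffle_hom:
  fixes X :: "nat \<Rightarrow> 'x set" and s :: "'k::field \<Rightarrow> 'v::ab_group_add \<Rightarrow> 'v"
  assumes A: "shuffle_algebra s A op" and \<phi>: "\<forall>n\<ge>1. \<forall>x\<in>X n. \<phi> n x \<in> A n"
  shows "shuffle_hom fscale (FA X) fop s A op (\<lambda>n. lin_ext s (eval_basis \<phi> op))"
  unfolding shuffle_hom_def
proof (intro conjI allI ballI impI)
  note md = shuffle_algebra_module[OF A]
  have eval_in: "eval_basis \<phi> op a \<in> A n" if "a \<in> P n X" for a n
    using eval_basis_in[OF A \<phi>, of "fst a" "snd a"] that by simp
  show "lin_ext s (eval_basis \<phi> op) u \<in> A n" if "u \<in> FA X n" for n u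
    using that eval_in by (intro lin_ext_in_subspace[OF md shuffle_algebra_subspace[OF A]]) (auto simp: FA_def)
  show "lin_on fscale s (FA X n) (lin_ext s (eval_basis \<phi> op))" for n
    by (simp add: lin_on_def lin_ext_add[OF md] lin_ext_scale[OF md])
  fix n m \<gamma> and u v :: "(nat list \<times> 'x list) \<Rightarrow>\<^sub>0 'k"
  assume "\<gamma> \<in> Sh n m \<and> u \<in> FA X n \<and> v \<in> FA X m"
  then have \<gamma>: "\<gamma> \<in> Sh n m" and u: "\<And>a. a \<in> Poly_Mapping.keys u \<Longrightarrow> a \<in> P n X"
    and v: "\<And>b. b \<in> Poly_Mapping.keys v \<Longrightarrow> b \<in> P m X"
    by (auto simp: FA_def)
  let ?E = "eval_basis \<phi> op" and ?u = "Poly_Mapping.lookup u" and ?v = "Poly_Mapping.lookup v"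
  have "lin_ext s ?E (fop n m \<gamma> u v)
      = (\<Sum>a\<in>Poly_Mapping.keys u. \<Sum>b\<in>Poly_Mapping.keys v. s (?u a * ?v b) (?E (basis_op \<gamma> a b)))"
    by (simp add: fop_def lin_ext_sum[OF md] lin_ext_single[OF md])
  also have "\<dots> = (\<Sum>a\<in>Poly_Mapping.keys u. \<Sum>b\<in>Poly_Mapping.keys v. s (?u a * ?v b) (op n m \<gamma> (?E a) (?E b)))"
    using eval_basis_basis_op[OF A \<phi> _ _ \<gamma>] u v by (intro sum.cong refl) force
  also have "\<dots> = op n m \<gamma> (lin_ext s ?E u) (lin_ext s ?E v)"
    unfolding lin_ext_def using eval_in u v by (intro shuffle_algebra_op_sum[OF A \<gamma>, symmetric]) auto
  finally show "lin_ext s ?E (fop n m \<gamma> u v) = op n m \<gamma> (lin_ext s ?E u) (lin_ext s ?E v)" .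
qed

lemma lin_ext_eval_basis_gen: "module s \<Longrightarrow> lin_ext s (eval_basis \<phi> op) (gen n x) = \<phi> n x"
  by (simp add: gen_def lin_ext_single module.scale_one)

lemma shuffle_hom_on_basis:
  assumes \<Psi>: "shuffle_hom fscale (FA X) fop s A op \<Psi>"
    and gen: "\<forall>n\<ge>1. \<forall>x\<in>X n. \<Psi> n (gen n x) = \<phi> n x"
  shows "(f, xs) \<in> P n X \<Longrightarrow> \<Psi> n (Poly_Mapping.single (f, xs) 1) = eval_basis \<phi> op (f, xs)"
proof (induction xs arbitrary: f n rule: induct_list012)
  case 1
  then show ?case
    by (simp add: P_def)
next
  case (2 x)
  then show ?case
    using gen by (auto simp: singleton_in_P_iff gen_def)
next
  case (3 x y zs)
  define k where "k = fib f 1"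
  note split = P_head_decomposition[OF "3.prems" list.distinct(2), folded k_def]
  have n: "k + (n - k) = n"
    using "3.prems" fib_le_length[of f 1] by (auto simp: P_def k_def)
  have "\<Psi> n (Poly_Mapping.single (f, x # y # zs) 1) = \<Psi> (k + (n - k)) (fop k (n - k) (head_shuffle f)
      (Poly_Mapping.single (replicate k 1, [x]) 1) (Poly_Mapping.single (tail_map f, y # zs) 1))"
    using split(4) by (simp add: n fop_eq_bilin_ext bilin_ext_single_single)
  also have "\<dots> = op k (n - k) (head_shuffle f)
      (\<Psi> k (Poly_Mapping.single (replicate k 1, [x]) 1)) (\<Psi> (n - k) (Poly_Mapping.single (tail_map f, y # zs) 1))"
    using \<Psi> split(1) single_in_FA[OF split(2)] single_in_FA[OF split(3)] unfolding shuffle_hom_def by blast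
  also have "\<dots> = op k (n - k) (head_shuffle f) (\<phi> k x) (eval_basis \<phi> op (tail_map f, y # zs))"
    using gen split(2) "3.IH"(2)[OF split(3)] by (simp add: singleton_in_P_iff gen_def)
  also have "\<dots> = eval_basis \<phi> op (f, x # y # zs)"
    using "3.prems" by (simp add: P_def k_def)
  finally show ?case .
qed

lemma lin_on_FA_eq_lin_ext:
  assumes "module s" "lin_on fscale s (FA X n) \<Psi>"
    and "\<And>a. a \<in> P n X \<Longrightarrow> \<Psi> (Poly_Mapping.single a 1) = g a" and "u \<in> FA X n"
  shows "\<Psi> u = lin_ext s g u"
proof -
  have single_in: "Poly_Mapping.single a c \<in> FA X n" if "a \<in> Poly_Mapping.keys u" for a c
    using that assms(4) by (auto simp: FA_def intro: single_in_FA)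
  have "\<Psi> u = \<Psi> (\<Sum>a\<in>Poly_Mapping.keys u. Poly_Mapping.single a (Poly_Mapping.lookup u a))"
    by (simp only: sum_single_lookup)
  also have "\<dots> = (\<Sum>a\<in>Poly_Mapping.keys u. \<Psi> (fscale (Poly_Mapping.lookup u a) (Poly_Mapping.single a 1)))"
    using single_in by (subst lin_on_sum[OF module_fscale FA_subspace assms(2)]) (auto simp: fscale_single)
  also have "\<dots> = lin_ext s g u"
    unfolding lin_ext_def using assms(2-4) single_in
    by (intro sum.cong refl) (auto simp: lin_on_def FA_def)
  finally show ?thesis .
qed

lemma shuffle_hom_eq_lin_ext_eval_basis:
  assumes A: "shuffle_algebra s A op" and \<Psi>: "shuffle_hom fscale (FA X) fop s A op \<Psi>"
    and gen: "\<forall>n\<ge>1. \<forall>x\<in>X n. \<Psi> n (gen n x) = \<phi> n x" and u: "u \<in> FA X n"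
  shows "\<Psi> n u = lin_ext s (eval_basis \<phi> op) u"
proof (rule lin_on_FA_eq_lin_ext[OF shuffle_algebra_module[OF A] _ _ u])
  show "lin_on fscale s (FA X n) (\<Psi> n)"
    using \<Psi> by (simp add: shuffle_hom_def)
  show "\<Psi> n (Poly_Mapping.single a 1) = eval_basis \<phi> op a" if "a \<in> P n X" for a
    using shuffle_hom_on_basis[OF \<Psi> gen, of "fst a" "snd a"] that by simp
qed

theorem mainTheorem1:
  fixes X :: "nat \<Rightarrow> 'x set"
    and scale :: "'k::field \<Rightarrow> 'v::ab_group_add \<Rightarrow> 'v"
    and B :: "nat \<Rightarrow> 'v set"
    and opB :: "nat \<Rightarrow> nat \<Rightarrow> nat list \<Rightarrow> 'v \<Rightarrow> 'v \<Rightarrow> 'v"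
    and \<phi> :: "nat \<Rightarrow> 'x \<Rightarrow> 'v"
  shows "shuffle_algebra (fscale :: 'k \<Rightarrow> _) (FA X) fop
    \<and> (shuffle_algebra scale B opB \<and> (\<forall>n\<ge>1. \<forall>x\<in>X n. \<phi> n x \<in> B n) \<longrightarrow>
        (\<exists>\<Phi>. shuffle_hom fscale (FA X) fop scale B opB \<Phi>
              \<and> (\<forall>n\<ge>1. \<forall>x\<in>X n. \<Phi> n (gen n x) = \<phi> n x)
              \<and> (\<forall>\<Psi>. shuffle_hom fscale (FA X) fop scale B opB \<Psi>
                     \<and> (\<forall>n\<ge>1. \<forall>x\<in>X n. \<Psi> n (gen n x) = \<phi> n x)
                     \<longrightarrow> (\<forall>n. \<forall>u\<in>FA X n. \<Psi> n u = \<Phi> n u))))"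
proof (intro conjI impI)
  show "shuffle_algebra (fscale :: 'k \<Rightarrow> _) (FA X) fop"
    by (rule FA_shuffle_algebra)
next
  assume "shuffle_algebra scale B opB \<and> (\<forall>n\<ge>1. \<forall>x\<in>X n. \<phi> n x \<in> B n)"
  then have B: "shuffle_algebra scale B opB" and \<phi>: "\<forall>n\<ge>1. \<forall>x\<in>X n. \<phi> n x \<in> B n"
    by auto
  let ?\<Phi> = "\<lambda>(n::nat) (u :: (nat list \<times> 'x list) \<Rightarrow>\<^sub>0 'k). lin_ext scale (eval_basis \<phi> opB) u"
  have "shuffle_hom fscale (FA X) fop scale B opB ?\<Phi>"
    by (rule lin_ext_eval_basis_shuffle_hom[OF B \<phi>])
  moreover have "\<forall>n\<ge>1. \<forall>x\<in>X n. ?\<Phi> n (gen n x) = \<phi> n x"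
    by (simp add: lin_ext_eval_basis_gen[OF shuffle_algebra_module[OF B]])
  moreover note shuffle_hom_eq_lin_ext_eval_basis[OF B]
  ultimately show "\<exists>\<Phi>. shuffle_hom fscale (FA X) fop scale B opB \<Phi>
      \<and> (\<forall>n\<ge>1. \<forall>x\<in>X n. \<Phi> n (gen n x) = \<phi> n x)
      \<and> (\<forall>\<Psi>. shuffle_hom fscale (FA X) fop scale B opB \<Psi>
             \<and> (\<forall>n\<ge>1. \<forall>x\<in>X n. \<Psi> n (gen n x) = \<phi> n x)
             \<longrightarrow> (\<forall>n. \<forall>u\<in>FA X n. \<Psi> n u = \<Phi> n u))"
    by blast
qed

end
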